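(* Let $d \ge 1$. Given $\varepsilon > 0$ and $0 < \delta < 1$, there exists $k \in \mathbb{N}$ such that for any sequence of linear isomorphisms $L_1, \ldots, L_n : \mathbb{R}^d \to \mathbb{R}^d$ with $n \ge k$, there exists $\tau_0 > 0$ such that for every $0 < \tau < \tau_0$ the following holds. Define the boxes $$U_0 = [-1,1]^{d-1} \times [-\tau,\tau],\quad V_0 = [-(1-\delta),1-\delta]^{d-1} \times [-(1-\delta)\tau,(1-\delta)\tau],\quad W_0 = [-1,1]^{d-1}\times[-\delta\tau,\delta\tau],$$ and for $1 \le i \le n$ let $U_i = L_i^{-1}U_{i-1}$, $V_i = L_i^{-1}V_{i-1}$, $W_i = L_i^{-1}W_{i-1}$. Then there exist $C^1$ diffeomorphisms $H_1, \ldots, H_n : \mathbb{R}^d \to \mathbb{R}^d$ such that each $H_i$ has derivative $\varepsilon$-close to the identity (i.e. $\|DH_i(x) - \mathrm{id}\| \le \varepsilon$ for all $x$), $H_i = \mathrm{id}$ outside $U_i$, and for all $i$ with $k \le i \le n$, $$L_{i-k+1}\circ H_{i-k+1}\circ\cdots\circ L_{i-1}\circ H_{i-1}\circ L_i\circ H_i(V_i) \subset W_{i-k}.$$ Moreover, the $H_i$ can be chosen so that for each $1 \le i \le n$, $H_i$ depends only on $\varepsilon$, $\delta$, $\tau$ and $L_1, \ldots, L_i$ (and not on $L_{i+1}, \ldots, L_n$). *)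

theory Defs
  imports "HOL-Analysis.Analysis"
begin

text \<open>Boxes in R^d = real^'n, where the coordinate j plays the role of the
  last coordinate: [-a,a]^(d-1) x [-b,b].\<close>
definition jbox :: "'n::finite \<Rightarrow> real \<Rightarrow> real \<Rightarrow> (real^'n) set" where
  "jbox j a b = {x. (\<forall>i. i \<noteq> j \<longrightarrow> \<bar>x $ i\<bar> \<le> a) \<and> \<bar>x $ j\<bar> \<le> b}"

fun iter_pre :: "(nat \<Rightarrow> 'a \<Rightarrow> 'a) \<Rightarrow> 'a set \<Rightarrow> nat \<Rightarrow> 'a set" where
  "iter_pre L S 0 = S"
| "iter_pre L S (Suc i) = L (Suc i) -` iter_pre L S i"

fun chain :: "(nat \<Rightarrow> 'a \<Rightarrow> 'a) \<Rightarrow> (nat \<Rightarrow> 'a \<Rightarrow> 'a) \<Rightarrow> nat \<Rightarrow> nat \<Rightarrow> 'a \<Rightarrow> 'a" where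
  "chain L H a 0 = id"
| "chain L H a (Suc m) = chain L H a m \<circ> (L (a + m) \<circ> H (a + m))"

definition C1_map :: "(real^'n::finite \<Rightarrow> real^'n) \<Rightarrow> bool" where
  "C1_map f \<longleftrightarrow> (\<exists>f' :: real^'n \<Rightarrow> ((real^'n) \<Rightarrow>\<^sub>L (real^'n)).
      (\<forall>x. (f has_derivative blinfun_apply (f' x)) (at x)) \<and> continuous_on UNIV f')"

definition C1_diffeo :: "(real^'n::finite \<Rightarrow> real^'n) \<Rightarrow> bool" where
  "C1_diffeo f \<longleftrightarrow> bij f \<and> C1_map f \<and> C1_map (inv f)"

definition deriv_close :: "real \<Rightarrow> (real^'n::finite \<Rightarrow> real^'n) \<Rightarrow> bool" where
  "deriv_close e f \<longleftrightarrow> (\<forall>x D. (f has_derivative D) (at x) \<longrightarrow> onorm (\<lambda>v. D v - v) \<le> e)"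

end

(*
  Write A_i = L_1 o ... o L_i, so that U_i is the preimage of U_0 under A_i, and let j be the
  distinguished coordinate. In the coordinates y = A_i x, the map H_i moves y by
  -c psi(y) (A_i w_i), where w_i is the shortest vector with (A_i w_i)_j = 1 and psi is a C^1
  cut-off that equals y_j on the box [-r, r]^(d-1) x [-r' tau, r' tau], with r = 1 - delta/2
  and r' = 1 - delta, and vanishes outside U_0. On that box a step multiplies y_j by 1 - c and
  moves the other coordinates by at most c r' tau M, where M bounds the coordinates of the A_i w_i.
  After k steps with (1 - c)^k < delta, the j-th coordinate of a point of V_i has dropped below
  delta tau, while the other coordinates have drifted by at most k c tau M, which is small once
  tau is. The derivative of H_i - id has norm at most c (1 + sup |bump'|) + O(tau), which is
  below epsilon for c and tau small; and x - phi(x) w is a C^1 diffeomorphism as soon as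
  Lip(phi) |w| < 1, by the contraction principle. H_i depends on A_i only.
*)

theory Submission
  imports Defs
begin

section \<open>Smooth cut-off functions\<close>

definition ramp_sq :: "real \<Rightarrow> real" where
  "ramp_sq t = (max 0 t)\<^sup>2"

lemma ramp_sq_nonneg: "0 \<le> ramp_sq t"
  by (simp add: ramp_sq_def)

lemma ramp_sq_eq_0: "t \<le> 0 \<Longrightarrow> ramp_sq t = 0"
  by (simp add: ramp_sq_def)

lemma ramp_sq_eq_square: "0 \<le> t \<Longrightarrow> ramp_sq t = t\<^sup>2"
  by (simp add: ramp_sq_def)

lemma ramp_sq_mono: "s \<le> t \<Longrightarrow> ramp_sq s \<le> ramp_sq t"
  unfolding ramp_sq_def by (intro power_mono) auto

lemma has_real_derivative_ramp_sq: "(ramp_sq has_real_derivative 2 * max 0 x) (at x)"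
proof (cases x "0 :: real" rule: linorder_cases)
  case less
  show ?thesis
    by (rule has_field_derivative_transform_within_open[where S="{..<0}" and f="\<lambda>_. 0"])
      (use less in \<open>auto simp: ramp_sq_def\<close>)
next
  case greater
  show ?thesis
    by (rule has_field_derivative_transform_within_open[where S="{0<..}" and f="\<lambda>t. t\<^sup>2"])
      (use greater in \<open>auto intro!: derivative_eq_intros simp: ramp_sq_def\<close>)
next
  case equal
  have "(ramp_sq y - ramp_sq 0) / (y - 0) = max 0 y" if "y \<noteq> 0" for y
    using that by (simp add: ramp_sq_def max_def power2_eq_square)
  then have "\<forall>\<^sub>F y in at 0. max 0 y = (ramp_sq y - ramp_sq 0) / (y - 0)"
    by (auto simp: eventually_at_filter)
  moreover have "((\<lambda>y. max 0 y) \<longlongrightarrow> max 0 (0::real)) (at 0)"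
    by (intro tendsto_intros)
  ultimately have "((\<lambda>y. (ramp_sq y - ramp_sq 0) / (y - 0)) \<longlongrightarrow> 0) (at 0)"
    by (simp add: tendsto_cong)
  then show ?thesis
    using equal by (simp add: has_field_derivative_iff)
qed

(* On [-r, r] the inner ramp vanishes, so bump r u = 1; for |u| >= 1 it is at least (1 - r^2)^2,
   which kills the outer ramp. *)
definition bump :: "real \<Rightarrow> real \<Rightarrow> real" where
  "bump r u = ramp_sq ((1 - r\<^sup>2)\<^sup>2 - ramp_sq (u\<^sup>2 - r\<^sup>2)) / ((1 - r\<^sup>2)\<^sup>2)\<^sup>2"

definition bump_deriv :: "real \<Rightarrow> real \<Rightarrow> real" where
  "bump_deriv r u = 2 * max 0 ((1 - r\<^sup>2)\<^sup>2 - ramp_sq (u\<^sup>2 - r\<^sup>2))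
     * - (2 * max 0 (u\<^sup>2 - r\<^sup>2) * (2 * u)) / ((1 - r\<^sup>2)\<^sup>2)\<^sup>2"

lemma has_real_derivative_bump: "(bump r has_real_derivative bump_deriv r u) (at u)"
proof -
  have "((\<lambda>u. ramp_sq ((1 - r\<^sup>2)\<^sup>2 - ramp_sq (u\<^sup>2 - r\<^sup>2))) has_real_derivative
      2 * max 0 ((1 - r\<^sup>2)\<^sup>2 - ramp_sq (u\<^sup>2 - r\<^sup>2)) * - (2 * max 0 (u\<^sup>2 - r\<^sup>2) * (2 * u))) (at u)"
    by (rule DERIV_chain2[OF has_real_derivative_ramp_sq] derivative_eq_intros refl | simp)+
  from DERIV_cdivide[OF this] show ?thesis
    unfolding bump_def[abs_def] bump_deriv_def by simp
qed

lemma has_derivative_bump: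
  "(f has_derivative f') (at x within S) \<Longrightarrow>
    ((\<lambda>x. bump r (f x)) has_derivative (\<lambda>v. bump_deriv r (f x) * f' v)) (at x within S)"
  using has_derivative_compose[OF _ has_real_derivative_bump[unfolded has_field_derivative_def]] .

lemma bump_height_pos:
  fixes r :: real
  assumes "0 \<le> r" "r < 1"
  shows "0 < (1 - r\<^sup>2)\<^sup>2"
proof -
  have "r\<^sup>2 < 1"
    using assms by (simp add: abs_square_less_1)
  then show ?thesis
    by simp
qed

lemma continuous_on_bump:
  "0 < r \<Longrightarrow> r < 1 \<Longrightarrow> continuous_on S f \<Longrightarrow> continuous_on S (\<lambda>x. bump r (f x))"
  unfolding bump_def ramp_sq_def using bump_height_pos[of r] by (intro continuous_intros) auto

lemma continuous_on_bump_deriv: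
  "0 < r \<Longrightarrow> r < 1 \<Longrightarrow> continuous_on S f \<Longrightarrow> continuous_on S (\<lambda>x. bump_deriv r (f x))"
  unfolding bump_deriv_def ramp_sq_def using bump_height_pos[of r] by (intro continuous_intros) auto

lemma bump_eq_1:
  assumes "\<bar>u\<bar> \<le> r" "r < 1"
  shows "bump r u = 1"
proof -
  have "u\<^sup>2 \<le> r\<^sup>2"
    using assms(1) by (metis abs_le_square_iff abs_of_nonneg abs_ge_zero order_trans)
  then show ?thesis
    using assms bump_height_pos[of r] by (simp add: bump_def ramp_sq_eq_0 ramp_sq_eq_square)
qed

lemma ramp_sq_ge_bump_height:
  assumes "1 \<le> \<bar>u\<bar>" "0 < r" "r < 1"
  shows "(1 - r\<^sup>2)\<^sup>2 \<le> ramp_sq (u\<^sup>2 - r\<^sup>2)"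
proof -
  have "1 \<le> u\<^sup>2"
    using assms by (metis abs_le_square_iff abs_one one_power2)
  moreover have "0 \<le> 1 - r\<^sup>2"
    using assms by (simp add: power_le_one)
  ultimately show ?thesis
    by (simp add: ramp_sq_eq_square power_mono)
qed

lemma bump_eq_0:
  assumes "1 \<le> \<bar>u\<bar>" "0 < r" "r < 1"
  shows "bump r u = 0"
proof -
  have "ramp_sq ((1 - r\<^sup>2)\<^sup>2 - ramp_sq (u\<^sup>2 - r\<^sup>2)) = 0"
    using ramp_sq_ge_bump_height[OF assms] by (simp add: ramp_sq_eq_0)
  then show ?thesis
    by (simp add: bump_def)
qed

lemma bump_deriv_eq_0:
  assumes "1 \<le> \<bar>u\<bar>" "0 < r" "r < 1"
  shows "bump_deriv r u = 0"
proof -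
  have "max 0 ((1 - r\<^sup>2)\<^sup>2 - ramp_sq (u\<^sup>2 - r\<^sup>2)) = 0"
    using ramp_sq_ge_bump_height[OF assms] by simp
  then show ?thesis
    by (simp add: bump_deriv_def)
qed

lemma bump_nonneg: "0 \<le> bump r u"
  by (simp add: bump_def ramp_sq_nonneg)

lemma bump_le_1:
  assumes "0 < r" "r < 1"
  shows "bump r u \<le> 1"
proof -
  have "ramp_sq ((1 - r\<^sup>2)\<^sup>2 - ramp_sq (u\<^sup>2 - r\<^sup>2)) \<le> ramp_sq ((1 - r\<^sup>2)\<^sup>2)"
    by (intro ramp_sq_mono) (simp add: ramp_sq_nonneg)
  then show ?thesis
    using bump_height_pos[of r] assms by (simp add: bump_def ramp_sq_eq_square)
qed

definition bump_deriv_bound :: "real \<Rightarrow> real" where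
  "bump_deriv_bound r = (SUP u. \<bar>bump_deriv r u\<bar>)"

lemma abs_bump_deriv_le_bound:
  assumes "0 < r" "r < 1"
  shows "\<bar>bump_deriv r u\<bar> \<le> bump_deriv_bound r"
proof -
  have "continuous_on {-1..1} (bump_deriv r)"
    using continuous_on_bump_deriv[OF assms continuous_on_id] by (simp add: id_def)
  then have "bounded (bump_deriv r ` {-1..1})"
    by (intro compact_imp_bounded compact_continuous_image compact_Icc)
  then obtain B where B: "\<forall>u\<in>{-1..1}. \<bar>bump_deriv r u\<bar> \<le> B"
    unfolding bounded_iff by auto
  have "\<bar>bump_deriv r u\<bar> \<le> max 0 B" for u
  proof (cases "\<bar>u\<bar> < 1")
    case True
    then have "\<bar>bump_deriv r u\<bar> \<le> B"
      using B by (simp add: abs_less_iff)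
    then show ?thesis
      by simp
  next
    case False
    then show ?thesis
      using bump_deriv_eq_0[OF _ assms, of u] by simp
  qed
  then show ?thesis
    unfolding bump_deriv_bound_def by (intro cSUP_upper bdd_aboveI2) auto
qed

lemma bump_deriv_bound_nonneg: "0 < r \<Longrightarrow> r < 1 \<Longrightarrow> 0 \<le> bump_deriv_bound r"
  using order_trans[OF abs_ge_zero abs_bump_deriv_le_bound] .

definition cut_id :: "real \<Rightarrow> real \<Rightarrow> real" where
  "cut_id r u = u * bump r u"

definition cut_id_deriv :: "real \<Rightarrow> real \<Rightarrow> real" where
  "cut_id_deriv r u = bump r u + u * bump_deriv r u"

lemma has_derivative_cut_id:
  assumes "(f has_derivative f') (at x within S)"
  shows "((\<lambda>x. cut_id r (f x)) has_derivative (\<lambda>v. cut_id_deriv r (f x) * f' v)) (at x within S)"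
proof -
  have "(cut_id r has_real_derivative cut_id_deriv r u) (at u)" for u
    using DERIV_mult[OF DERIV_ident has_real_derivative_bump]
    unfolding cut_id_def[abs_def] cut_id_deriv_def by (simp add: mult.commute)
  from has_derivative_compose[OF assms this[unfolded has_field_derivative_def]] show ?thesis .
qed

lemma abs_cut_id_le_1:
  assumes "0 < r" "r < 1"
  shows "\<bar>cut_id r u\<bar> \<le> 1"
proof (cases "\<bar>u\<bar> < 1")
  case True
  then have "\<bar>u\<bar> * bump r u \<le> 1 * 1"
    using bump_nonneg bump_le_1[OF assms] by (intro mult_mono) auto
  then show ?thesis
    by (simp add: cut_id_def abs_mult bump_nonneg)
qed (simp add: cut_id_def bump_eq_0 assms)

lemma abs_cut_id_deriv_le:
  assumes "0 < r" "r < 1"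
  shows "\<bar>cut_id_deriv r u\<bar> \<le> 1 + bump_deriv_bound r"
proof (cases "\<bar>u\<bar> < 1")
  case True
  then have "\<bar>u\<bar> * \<bar>bump_deriv r u\<bar> \<le> 1 * bump_deriv_bound r"
    using abs_bump_deriv_le_bound[OF assms] bump_deriv_bound_nonneg[OF assms]
    by (intro mult_mono) auto
  moreover have "\<bar>cut_id_deriv r u\<bar> \<le> \<bar>bump r u\<bar> + \<bar>u\<bar> * \<bar>bump_deriv r u\<bar>"
    unfolding cut_id_deriv_def abs_mult[symmetric] by (rule abs_triangle_ineq)
  ultimately show ?thesis
    using bump_nonneg[of r u] bump_le_1[OF assms, of u] by linarith
next
  case False
  then show ?thesis
    using bump_deriv_bound_nonneg[OF assms]
    by (simp add: cut_id_deriv_def bump_eq_0 bump_deriv_eq_0 assms)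
qed

definition transverse_bump :: "'n::finite \<Rightarrow> real \<Rightarrow> real^'n \<Rightarrow> real" where
  "transverse_bump j r y = (\<Prod>m\<in>-{j}. bump r (y $ m))"

definition transverse_bump_deriv :: "'n::finite \<Rightarrow> real \<Rightarrow> real^'n \<Rightarrow> real^'n \<Rightarrow> real" where
  "transverse_bump_deriv j r y u =
     (\<Sum>m\<in>-{j}. bump_deriv r (y $ m) * u $ m * (\<Prod>l\<in>-{j}-{m}. bump r (y $ l)))"

lemma has_derivative_transverse_bump:
  "(transverse_bump j r has_derivative transverse_bump_deriv j r y) (at y)"
  unfolding transverse_bump_def[abs_def] transverse_bump_deriv_def[abs_def]
  by (intro has_derivative_prod has_derivative_bump bounded_linear_imp_has_derivative
      bounded_linear_vec_nth)

lemma transverse_bump_nonneg: "0 \<le> transverse_bump j r y"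
  unfolding transverse_bump_def by (intro prod_nonneg) (simp add: bump_nonneg)

lemma transverse_bump_le_1: "0 < r \<Longrightarrow> r < 1 \<Longrightarrow> transverse_bump j r y \<le> 1"
  unfolding transverse_bump_def by (intro prod_le_1) (simp_all add: bump_nonneg bump_le_1)

lemma abs_transverse_bump_deriv_le:
  fixes y u :: "real^'n::finite"
  assumes "0 < r" "r < 1"
  shows "\<bar>transverse_bump_deriv j r y u\<bar> \<le> CARD('n) * bump_deriv_bound r * norm u"
proof -
  let ?B = "bump_deriv_bound r"
  note B = abs_bump_deriv_le_bound[OF assms] and B0 = bump_deriv_bound_nonneg[OF assms]
  have "0 \<le> (\<Prod>l\<in>-{j}-{m}. bump r (y $ l))" "(\<Prod>l\<in>-{j}-{m}. bump r (y $ l)) \<le> 1" for m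
    by (intro prod_nonneg prod_le_1; simp add: bump_nonneg bump_le_1 assms)+
  then have "\<bar>\<Prod>l\<in>-{j}-{m}. bump r (y $ l)\<bar> \<le> 1" for m
    by (metis abs_of_nonneg)
  then have "\<bar>bump_deriv r (y $ m) * u $ m * (\<Prod>l\<in>-{j}-{m}. bump r (y $ l))\<bar> \<le> ?B * norm u * 1" for m
    unfolding abs_mult using B B0 component_le_norm_cart[of u m]
    by (intro mult_mono) auto
  then have "\<bar>transverse_bump_deriv j r y u\<bar> \<le> card (-{j}) * (?B * norm u)"
    unfolding transverse_bump_deriv_def by (intro order_trans[OF sum_abs sum_bounded_above]) simp
  also have "\<dots> \<le> CARD('n) * (?B * norm u)"
    using B0 by (intro mult_right_mono) (auto intro: card_mono)
  finally show ?thesis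
    by (simp add: mult.assoc)
qed

lemma continuous_on_transverse_bump_deriv:
  assumes "0 < r" "r < 1" "continuous_on S f"
  shows "continuous_on S (\<lambda>x. transverse_bump_deriv j r (f x) u)"
  unfolding transverse_bump_deriv_def
  by (intro continuous_on_sum continuous_on_mult continuous_on_prod continuous_on_const
      continuous_on_bump continuous_on_bump_deriv assms continuous_on_component)

lemma continuous_on_transverse_bump:
  assumes "0 < r" "r < 1" "continuous_on S f"
  shows "continuous_on S (\<lambda>x. transverse_bump j r (f x))"
  unfolding transverse_bump_def
  by (intro continuous_on_prod ballI continuous_on_bump assms continuous_on_component)

definition profile :: "'n::finite \<Rightarrow> real \<Rightarrow> real \<Rightarrow> real \<Rightarrow> real^'n \<Rightarrow> real" where
  "profile j r r' \<tau> y = transverse_bump j r y * (\<tau> * cut_id r' (y $ j / \<tau>))"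

definition profile_deriv :: "'n::finite \<Rightarrow> real \<Rightarrow> real \<Rightarrow> real \<Rightarrow> real^'n \<Rightarrow> real^'n \<Rightarrow> real" where
  "profile_deriv j r r' \<tau> y u =
     transverse_bump j r y * cut_id_deriv r' (y $ j / \<tau>) * u $ j
     + transverse_bump_deriv j r y u * (\<tau> * cut_id r' (y $ j / \<tau>))"

lemma has_derivative_profile:
  assumes "\<tau> \<noteq> 0"
  shows "(profile j r r' \<tau> has_derivative profile_deriv j r r' \<tau> y) (at y)"
proof -
  have "((\<lambda>y. y $ j / \<tau>) has_derivative (\<lambda>u. u $ j / \<tau>)) (at y)"
    by (intro bounded_linear_imp_has_derivative bounded_linear_compose[OF bounded_linear_divide]
        bounded_linear_vec_nth)
  from has_derivative_mult_right[OF has_derivative_cut_id[OF this], of \<tau>]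
  have "((\<lambda>y. \<tau> * cut_id r' (y $ j / \<tau>)) has_derivative
      (\<lambda>u. cut_id_deriv r' (y $ j / \<tau>) * u $ j)) (at y)"
    using assms by simp
  from has_derivative_mult[OF has_derivative_transverse_bump this] show ?thesis
    unfolding profile_def[abs_def] profile_deriv_def[abs_def] by (simp add: algebra_simps)
qed

lemma continuous_on_profile_deriv:
  assumes r: "0 < r" "r < 1" and r': "0 < r'" "r' < 1" and f: "continuous_on S f"
  shows "continuous_on S (\<lambda>x. profile_deriv j r r' \<tau> (f x) u)"
proof -
  have "continuous_on S (\<lambda>x. f x $ j * inverse \<tau>)"
    by (intro continuous_on_mult_right continuous_on_component f)
  then have fj: "continuous_on S (\<lambda>x. f x $ j / \<tau>)"
    by (simp add: divide_inverse)
  show ?thesis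
    unfolding profile_deriv_def cut_id_def cut_id_deriv_def
    by (intro continuous_on_add continuous_on_mult continuous_on_const fj
        continuous_on_transverse_bump[OF r f] continuous_on_transverse_bump_deriv[OF r f]
        continuous_on_bump[OF r' fj] continuous_on_bump_deriv[OF r' fj])
qed

lemma abs_profile_deriv_le:
  fixes y u :: "real^'n::finite"
  assumes r: "0 < r" "r < 1" and r': "0 < r'" "r' < 1" and "0 < \<tau>"
  shows "\<bar>profile_deriv j r r' \<tau> y u\<bar>
    \<le> (1 + bump_deriv_bound r') * \<bar>u $ j\<bar> + \<tau> * (CARD('n) * bump_deriv_bound r * norm u)"
proof -
  have "0 \<le> bump_deriv_bound r'"
    by (rule bump_deriv_bound_nonneg[OF r'])
  have "\<bar>transverse_bump j r y\<bar> \<le> 1"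
    using transverse_bump_nonneg transverse_bump_le_1[OF r] by (metis abs_of_nonneg)
  then have "\<bar>transverse_bump j r y * cut_id_deriv r' (y $ j / \<tau>) * u $ j\<bar>
      \<le> 1 * (1 + bump_deriv_bound r') * \<bar>u $ j\<bar>"
    unfolding abs_mult using abs_cut_id_deriv_le[OF r'] \<open>0 \<le> bump_deriv_bound r'\<close>
    by (intro mult_mono) auto
  moreover have "\<bar>transverse_bump_deriv j r y u * (\<tau> * cut_id r' (y $ j / \<tau>))\<bar>
      \<le> CARD('n) * bump_deriv_bound r * norm u * (\<tau> * 1)"
    unfolding abs_mult
    using abs_transverse_bump_deriv_le[OF r] bump_deriv_bound_nonneg[OF r] abs_cut_id_le_1[OF r']
      \<open>0 < \<tau>\<close>
    by (intro mult_mono) auto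
  ultimately show ?thesis
    unfolding profile_deriv_def by (smt (verit, best) abs_triangle_ineq mult.commute)
qed

lemma profile_eq_coord:
  assumes "0 < \<tau>" "r' < 1" "r < 1" "y \<in> jbox j r (r' * \<tau>)"
  shows "profile j r r' \<tau> y = y $ j"
proof -
  have "transverse_bump j r y = 1"
    unfolding transverse_bump_def using assms(3,4)
    by (intro prod.neutral) (simp add: jbox_def bump_eq_1)
  moreover have "\<bar>y $ j / \<tau>\<bar> \<le> r'"
    using assms(1,4) by (simp add: jbox_def abs_divide divide_le_eq)
  ultimately show ?thesis
    using assms(1,2) by (simp add: profile_def cut_id_def bump_eq_1)
qed

lemma profile_eq_0:
  assumes r: "0 < r" "r < 1" and r': "0 < r'" "r' < 1" and "0 < \<tau>" "y \<notin> jbox j 1 \<tau>"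
  shows "profile j r r' \<tau> y = 0"
proof -
  consider m where "m \<noteq> j" "1 < \<bar>y $ m\<bar>" | "\<tau> < \<bar>y $ j\<bar>"
    using assms(6) unfolding jbox_def by force
  then show ?thesis
  proof cases
    case 1
    then have "transverse_bump j r y = 0"
      unfolding transverse_bump_def by (intro prod_zero) (auto intro!: bexI[of _ m] bump_eq_0 r)
    then show ?thesis
      by (simp add: profile_def)
  next
    case 2
    then have "1 \<le> \<bar>y $ j / \<tau>\<bar>"
      using \<open>0 < \<tau>\<close> by (simp add: abs_divide le_divide_eq)
    then show ?thesis
      by (simp add: profile_def cut_id_def bump_eq_0 r')
  qed
qed

section \<open>Shears of the identity\<close>

lemma C1_mapI:
  fixes f :: "real^'n::finite \<Rightarrow> real^'n"
  assumes der: "\<And>x. (f has_derivative f' x) (at x)" and cont: "\<And>v. continuous_on UNIV (\<lambda>x. f' x v)"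
  shows "C1_map f"
  unfolding C1_map_def
proof (intro exI[of _ "\<lambda>x. Blinfun (f' x)"] conjI allI)
  have lin: "bounded_linear (f' x)" for x
    using der has_derivative_bounded_linear by blast
  show "(f has_derivative blinfun_apply (Blinfun (f' x))) (at x)" for x
    using der lin by (simp add: bounded_linear_Blinfun_apply)
  show "continuous_on UNIV (\<lambda>x. Blinfun (f' x))"
    by (rule continuous_on_blinfun_componentwise) (simp add: bounded_linear_Blinfun_apply lin cont)
qed

lemma norm_minus_lipschitz_ge:
  fixes f :: "'a::real_normed_vector \<Rightarrow> 'a"
  assumes "\<And>x y. norm (f x - f y) \<le> q * norm (x - y)"
  shows "(1 - q) * norm (x - y) \<le> norm ((x - f x) - (y - f y))"
proof -
  have "norm (x - y) \<le> norm ((x - f x) - (y - f y)) + norm (f x - f y)"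
    using norm_triangle_ineq[of "(x - f x) - (y - f y)" "f x - f y"] by simp
  then show ?thesis
    using assms[of x y] by (simp add: algebra_simps)
qed

lemma bij_minus_contraction:
  fixes f :: "'a::banach \<Rightarrow> 'a"
  assumes lip: "\<And>x y. norm (f x - f y) \<le> q * norm (x - y)" and "0 \<le> q" "q < 1"
  shows "bij (\<lambda>x. x - f x)"
proof (rule bijI)
  show "inj (\<lambda>x. x - f x)"
  proof (rule injI)
    fix x y
    assume "x - f x = y - f y"
    then have "(1 - q) * norm (x - y) \<le> 0"
      using norm_minus_lipschitz_ge[OF lip, of x y] by simp
    then show "x = y"
      using \<open>q < 1\<close> by (simp add: mult_le_0_iff)
  qed
  have "\<exists>x. y + f x = x" for y
    using banach_fix_type[OF \<open>0 \<le> q\<close> \<open>q < 1\<close>, of "\<lambda>x. y + f x"] lip by (auto simp: dist_norm)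
  then show "surj (\<lambda>x. x - f x)"
    by (metis add_diff_cancel surjI)
qed

lemma lipschitz_on_inv_minus_contraction:
  fixes f :: "'a::banach \<Rightarrow> 'a"
  assumes lip: "\<And>x y. norm (f x - f y) \<le> q * norm (x - y)" and "0 \<le> q" "q < 1"
  shows "(1 / (1 - q))-lipschitz_on UNIV (inv (\<lambda>x. x - f x))"
proof (rule lipschitz_onI)
  let ?g = "inv (\<lambda>x. x - f x)"
  fix y z
  have "?g y - f (?g y) = y" for y
    using bij_minus_contraction[OF assms] surj_f_inv_f[of "\<lambda>x. x - f x"] by (simp add: bij_is_surj)
  then have "(1 - q) * norm (?g y - ?g z) \<le> norm (y - z)"
    using norm_minus_lipschitz_ge[OF lip, of "?g y" "?g z"] by simp
  then show "dist (?g y) (?g z) \<le> 1 / (1 - q) * dist y z"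
    using \<open>q < 1\<close> by (simp add: dist_norm pos_le_divide_eq mult.commute)
  show "0 \<le> 1 / (1 - q)"
    using \<open>q < 1\<close> by simp
qed

lemma has_derivative_inverse_shear:
  fixes \<phi> :: "'a::real_normed_vector \<Rightarrow> real"
  assumes der: "(\<phi> has_derivative D) (at (g y))" and "\<bar>D w\<bar> < 1" and "continuous (at y) g"
    and inv: "\<And>z. g z - \<phi> (g z) *\<^sub>R w = z"
  shows "(g has_derivative (\<lambda>v. v + (D v / (1 - D w)) *\<^sub>R w)) (at y)"
proof (rule has_derivative_inverse_basic[where f="\<lambda>x. x - \<phi> x *\<^sub>R w" and T=UNIV])
  have lin: "bounded_linear D"
    using der has_derivative_bounded_linear by blast
  show "((\<lambda>x. x - \<phi> x *\<^sub>R w) has_derivative (\<lambda>v. v - D v *\<^sub>R w)) (at (g y))"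
    by (intro has_derivative_diff has_derivative_ident has_derivative_scaleR_left der)
  show "bounded_linear (\<lambda>v. v + (D v / (1 - D w)) *\<^sub>R w)"
    by (intro bounded_linear_add bounded_linear_ident lin
        bounded_linear_compose[OF bounded_linear_scaleR_left]
        bounded_linear_compose[OF bounded_linear_divide])
  have "D v - D v * D w = D v * (1 - D w)" for v
    by (simp add: algebra_simps)
  then show "(\<lambda>v. v + (D v / (1 - D w)) *\<^sub>R w) \<circ> (\<lambda>v. v - D v *\<^sub>R w) = id"
    using \<open>\<bar>D w\<bar> < 1\<close> by (auto simp: fun_eq_iff linear_simps[OF lin])
qed (use assms in auto)

lemma has_derivative_shear:
  "(\<phi> has_derivative D) F \<Longrightarrow> ((\<lambda>x. x - \<phi> x *\<^sub>R w) has_derivative (\<lambda>v. v - D v *\<^sub>R w)) F"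
  by (intro has_derivative_diff has_derivative_ident has_derivative_scaleR_left)

lemma deriv_close_mono: "deriv_close e f \<Longrightarrow> e \<le> e' \<Longrightarrow> deriv_close e' f"
  unfolding deriv_close_def by (meson order_trans)

lemma shear_deriv_close:
  fixes \<phi> :: "real^'n::finite \<Rightarrow> real"
  assumes der: "\<And>x. (\<phi> has_derivative D x) (at x)" and bnd: "\<And>x v. \<bar>D x v\<bar> \<le> q * norm v"
  shows "deriv_close (q * norm w) (\<lambda>x. x - \<phi> x *\<^sub>R w)"
  unfolding deriv_close_def
proof (intro allI impI)
  fix x E
  assume "((\<lambda>x. x - \<phi> x *\<^sub>R w) has_derivative E) (at x)"
  from has_derivative_unique[OF this has_derivative_shear[OF der]]
  have "E = (\<lambda>v. v - D x v *\<^sub>R w)" .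
  moreover have "norm (D x v *\<^sub>R w) \<le> q * norm w * norm v" for v
    using mult_right_mono[OF bnd[of x v] norm_ge_zero[of w]] by (simp add: algebra_simps)
  ultimately show "onorm (\<lambda>v. E v - v) \<le> q * norm w"
    by (auto intro: onorm_le)
qed

lemma shear_C1_diffeo:
  fixes \<phi> :: "real^'n::finite \<Rightarrow> real"
  assumes der: "\<And>x. (\<phi> has_derivative D x) (at x)" and cont: "\<And>v. continuous_on UNIV (\<lambda>x. D x v)"
    and bnd: "\<And>x v. \<bar>D x v\<bar> \<le> q * norm v" and "0 \<le> q" and q: "q * norm w < 1"
  shows "C1_diffeo (\<lambda>x. x - \<phi> x *\<^sub>R w)"
proof -
  define H where "H = (\<lambda>x. x - \<phi> x *\<^sub>R w)"
  define g where "g = inv H"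
  have "onorm (D x) \<le> q" for x
    by (rule onorm_le) (use bnd in auto)
  then have "norm (\<phi> x - \<phi> y) \<le> q * norm (x - y)" for x y
    using der by (intro differentiable_bound[of UNIV]) (auto intro: has_derivative_at_withinI)
  then have lip: "norm (\<phi> x *\<^sub>R w - \<phi> y *\<^sub>R w) \<le> q * norm w * norm (x - y)" for x y
    using mult_right_mono[OF _ norm_ge_zero[of w], of "\<bar>\<phi> x - \<phi> y\<bar>" "q * norm (x - y)"]
    by (simp add: scaleR_diff_left[symmetric] mult_ac)
  have "0 \<le> q * norm w"
    using \<open>0 \<le> q\<close> by simp
  have "bij H"
    unfolding H_def by (rule bij_minus_contraction[OF lip \<open>0 \<le> q * norm w\<close> q])
  then have Hg: "H (g y) = y" for y
    by (simp add: g_def bij_is_surj surj_f_inv_f)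
  have g_cont: "continuous_on UNIV g"
    unfolding g_def H_def
    using lipschitz_on_inv_minus_contraction[OF lip \<open>0 \<le> q * norm w\<close> q]
    by (rule lipschitz_on_continuous_on)
  have Dw: "\<bar>D x w\<bar> < 1" for x
    using bnd[of x w] q by simp
  have "C1_map H"
    unfolding H_def
    by (rule C1_mapI[OF has_derivative_shear[OF der]]) (intro continuous_intros cont)
  moreover have "C1_map g"
  proof (rule C1_mapI)
    show "(g has_derivative (\<lambda>v. v + (D (g y) v / (1 - D (g y) w)) *\<^sub>R w)) (at y)" for y
      using Hg g_cont Dw unfolding H_def
      by (intro has_derivative_inverse_shear[OF der]) (auto simp: continuous_on_eq_continuous_at)
    have "\<forall>y\<in>UNIV. 1 - D (g y) w \<noteq> 0"
      using Dw by (metis abs_one less_irrefl eq_iff_diff_eq_0)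
    moreover have "continuous_on UNIV (\<lambda>y. D (g y) u)" for u
      using continuous_on_compose2[OF cont g_cont subset_UNIV] .
    ultimately show "continuous_on UNIV (\<lambda>y. v + (D (g y) v / (1 - D (g y) w)) *\<^sub>R w)" for v
      by (intro continuous_on_add continuous_on_const continuous_on_scaleR continuous_on_divide
          continuous_on_diff)
  qed
  ultimately show ?thesis
    using \<open>bij H\<close> unfolding C1_diffeo_def g_def H_def by blast
qed

section \<open>Shear maps in the coordinates of L_1 o ... o L_i\<close>

fun prefix_comp :: "(nat \<Rightarrow> 'a \<Rightarrow> 'a) \<Rightarrow> nat \<Rightarrow> 'a \<Rightarrow> 'a" where
  "prefix_comp L 0 = id"
| "prefix_comp L (Suc i) = prefix_comp L i \<circ> L (Suc i)"

lemma iter_pre_eq_vimage: "iter_pre L S i = prefix_comp L i -` S"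
  by (induction i) auto

lemma prefix_comp_cong: "(\<forall>m\<in>{1..i}. L m = L' m) \<Longrightarrow> prefix_comp L i = prefix_comp L' i"
  by (induction i) auto

lemma linear_bij_prefix_comp:
  "(\<forall>m\<in>{1..i}. linear (L m) \<and> bij (L m)) \<Longrightarrow> linear (prefix_comp L i) \<and> bij (prefix_comp L i)"
  by (induction i) (auto intro: linear_id linear_compose bij_comp)

definition row_dual :: "'n::finite \<Rightarrow> (real^'n \<Rightarrow> real^'n) \<Rightarrow> real^'n" where
  "row_dual j A = (1 / (norm (matrix A $ j))\<^sup>2) *\<^sub>R matrix A $ j"

definition row_slope :: "'n::finite \<Rightarrow> (real^'n \<Rightarrow> real^'n) \<Rightarrow> real" where
  "row_slope j A = onorm A / norm (matrix A $ j)"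

lemma linear_nth_eq_inner_row:
  fixes A :: "real^'n::finite \<Rightarrow> real^'m::finite"
  assumes "linear A"
  shows "A v $ j = matrix A $ j \<bullet> v"
proof -
  have "A v = matrix A *v v"
    using matrix_vector_mul(2)[OF assms] by metis
  then show ?thesis
    by (simp add: matrix_mult_dot)
qed

lemma matrix_row_nonzero:
  fixes A :: "real^'n::finite \<Rightarrow> real^'m::finite"
  assumes "linear A" "surj A"
  shows "matrix A $ j \<noteq> 0"
proof
  assume "matrix A $ j = 0"
  obtain v where "A v = axis j 1"
    using \<open>surj A\<close> by (metis surjD)
  then show False
    using linear_nth_eq_inner_row[OF \<open>linear A\<close>, of v j] \<open>matrix A $ j = 0\<close> by simp
qed

lemma row_dual_nth:
  fixes A :: "real^'n::finite \<Rightarrow> real^'n"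
  assumes "linear A" "surj A"
  shows "A (row_dual j A) $ j = 1"
  using matrix_row_nonzero[OF assms, of j]
  by (simp add: linear_nth_eq_inner_row[OF assms(1)] row_dual_def power2_norm_eq_inner)

lemma norm_row_dual: "norm (row_dual j A) = 1 / norm (matrix A $ j)"
  by (simp add: row_dual_def power2_eq_square)

lemma abs_row_dual_nth_le:
  fixes A :: "real^'n::finite \<Rightarrow> real^'n"
  assumes "linear A"
  shows "\<bar>A (row_dual j A) $ m\<bar> \<le> row_slope j A"
proof -
  have "\<bar>A (row_dual j A) $ m\<bar> \<le> norm (A (row_dual j A))"
    by (rule component_le_norm_cart)
  also have "\<dots> \<le> onorm A * norm (row_dual j A)"
    using assms by (intro onorm linear_conv_bounded_linear[THEN iffD1])
  finally show ?thesis
    by (simp add: norm_row_dual row_slope_def)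
qed

definition shear_map ::
    "'n::finite \<Rightarrow> real \<Rightarrow> real \<Rightarrow> real \<Rightarrow> real \<Rightarrow> (real^'n \<Rightarrow> real^'n) \<Rightarrow> real^'n \<Rightarrow> real^'n" where
  "shear_map j r r' c \<tau> A x = x - (c * profile j r r' \<tau> (A x)) *\<^sub>R row_dual j A"

lemma abs_profile_deriv_linear_le:
  fixes A :: "real^'n::finite \<Rightarrow> real^'n"
  assumes "linear A" and r: "0 < r" "r < 1" and r': "0 < r'" "r' < 1" and "0 < \<tau>"
  shows "\<bar>profile_deriv j r r' \<tau> (A x) (A v)\<bar> \<le> ((1 + bump_deriv_bound r') * norm (matrix A $ j)
    + \<tau> * (CARD('n) * bump_deriv_bound r * onorm A)) * norm v"
proof -
  let ?B = "bump_deriv_bound r" and ?B' = "bump_deriv_bound r'"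
  have "\<bar>A v $ j\<bar> \<le> norm (matrix A $ j) * norm v"
    unfolding linear_nth_eq_inner_row[OF \<open>linear A\<close>] by (rule Cauchy_Schwarz_ineq2)
  then have "(1 + ?B') * \<bar>A v $ j\<bar> \<le> (1 + ?B') * (norm (matrix A $ j) * norm v)"
    using bump_deriv_bound_nonneg[OF r'] by (intro mult_left_mono) auto
  moreover have "norm (A v) \<le> onorm A * norm v"
    using \<open>linear A\<close> by (intro onorm linear_conv_bounded_linear[THEN iffD1])
  then have "\<tau> * (CARD('n) * ?B * norm (A v)) \<le> \<tau> * (CARD('n) * ?B * (onorm A * norm v))"
    using \<open>0 < \<tau>\<close> bump_deriv_bound_nonneg[OF r] by (intro mult_left_mono) auto
  ultimately show ?thesis
    using abs_profile_deriv_le[OF r r' \<open>0 < \<tau>\<close>, of j "A x" "A v"] by (simp add: algebra_simps)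
qed

lemma shear_map_C1_diffeo_deriv_close:
  fixes A :: "real^'n::finite \<Rightarrow> real^'n"
  assumes A: "linear A" "surj A" and r: "0 < r" "r < 1" and r': "0 < r'" "r' < 1"
    and "0 < \<tau>" "0 \<le> c" and "e < 1"
    and e: "c * (1 + bump_deriv_bound r') + \<tau> * c * CARD('n) * bump_deriv_bound r * row_slope j A
      \<le> e"
  shows "C1_diffeo (shear_map j r r' c \<tau> A) \<and> deriv_close e (shear_map j r r' c \<tau> A)"
proof -
  let ?a = "norm (matrix A $ j)" and ?B = "bump_deriv_bound r" and ?B' = "bump_deriv_bound r'"
  define q where "q = c * ((1 + ?B') * ?a + \<tau> * (CARD('n) * ?B * onorm A))"
  define D where "D x v = c * profile_deriv j r r' \<tau> (A x) (A v)" for x v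
  have lin: "bounded_linear A"
    using A(1) linear_conv_bounded_linear by blast
  have der: "((\<lambda>x. c * profile j r r' \<tau> (A x)) has_derivative D x) (at x)" for x
    unfolding D_def using \<open>0 < \<tau>\<close>
    by (intro has_derivative_mult_right has_derivative_profile
        has_derivative_compose[OF bounded_linear_imp_has_derivative[OF lin]]) simp
  have cont: "continuous_on UNIV (\<lambda>x. D x v)" for v
    unfolding D_def
    by (intro continuous_on_mult_left continuous_on_profile_deriv r r' linear_continuous_on lin)
  have bnd: "\<bar>D x v\<bar> \<le> q * norm v" for x v
    using mult_left_mono[OF abs_profile_deriv_linear_le[OF A(1) r r' \<open>0 < \<tau>\<close>] \<open>0 \<le> c\<close>]
    unfolding D_def q_def by (simp add: abs_mult mult.assoc \<open>0 \<le> c\<close>)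
  have "0 < ?a"
    using matrix_row_nonzero[OF A] by simp
  then have "q * norm (row_dual j A) \<le> e"
    using e by (simp add: q_def norm_row_dual row_slope_def field_simps)
  moreover have "0 \<le> q"
    unfolding q_def
    using \<open>0 < \<tau>\<close> \<open>0 \<le> c\<close> bump_deriv_bound_nonneg[OF r] bump_deriv_bound_nonneg[OF r']
    by (simp add: onorm_pos_le[OF lin])
  ultimately show ?thesis
    unfolding shear_map_def[abs_def]
    using shear_C1_diffeo[OF der cont bnd] shear_deriv_close[OF der bnd] \<open>e < 1\<close>
    by (auto intro: deriv_close_mono)
qed

lemma shear_map_eq_id:
  assumes "0 < r" "r < 1" "0 < r'" "r' < 1" "0 < \<tau>" "A x \<notin> jbox j 1 \<tau>"
  shows "shear_map j r r' c \<tau> A x = x"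
  using profile_eq_0[OF assms] by (simp add: shear_map_def)

lemma shear_map_in_coordinates:
  fixes A :: "real^'n::finite \<Rightarrow> real^'n"
  assumes "linear A" "0 < \<tau>" "r' < 1" "r < 1" "A x \<in> jbox j r (r' * \<tau>)"
  shows "A (shear_map j r r' c \<tau> A x) = A x - (c * A x $ j) *\<^sub>R A (row_dual j A)"
  using profile_eq_coord[OF assms(2-)]
  by (simp add: shear_map_def linear_diff[OF assms(1)] linear_scale[OF assms(1)])

section \<open>Iterating the shear maps\<close>

lemma jbox_mono: "a \<le> a' \<Longrightarrow> b \<le> b' \<Longrightarrow> jbox j a b \<subseteq> jbox j a' b'"
  unfolding jbox_def by auto

lemma shear_step_in_jbox:
  assumes y: "y \<in> jbox j \<rho> s" and "s \<le> s0" and c: "0 \<le> c" "c \<le> 1"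
    and u: "\<And>m. m \<noteq> j \<Longrightarrow> \<bar>u $ m\<bar> \<le> M" "u $ j = 1"
  shows "y - (c * y $ j) *\<^sub>R u \<in> jbox j (\<rho> + c * s0 * M) ((1 - c) * s)"
proof -
  let ?z = "y - (c * y $ j) *\<^sub>R u"
  have yj: "\<bar>y $ j\<bar> \<le> s"
    using y by (simp add: jbox_def)
  have "\<bar>?z $ m\<bar> \<le> \<rho> + c * s0 * M" if "m \<noteq> j" for m
  proof -
    have "\<bar>c * y $ j * u $ m\<bar> \<le> c * s0 * M"
      unfolding abs_mult using c yj \<open>s \<le> s0\<close> u(1)[OF that]
      by (intro mult_mono) (auto intro: mult_left_mono order_trans[OF abs_ge_zero])
    moreover have "\<bar>y $ m\<bar> \<le> \<rho>"
      using y that by (simp add: jbox_def)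
    ultimately show ?thesis
      using abs_triangle_ineq4[of "y $ m" "c * y $ j * u $ m"] by simp
  qed
  moreover have "?z $ j = (1 - c) * y $ j"
    using u(2) by (simp add: algebra_simps)
  then have "\<bar>?z $ j\<bar> \<le> (1 - c) * s"
    using yj c by (simp add: abs_mult mult_left_mono)
  ultimately show ?thesis
    unfolding jbox_def by blast
qed

lemma chain_in_jbox:
  fixes L H :: "nat \<Rightarrow> real^'n::finite \<Rightarrow> real^'n"
  assumes step: "\<And>i x. i \<in> {1..n} \<Longrightarrow> prefix_comp L i x \<in> jbox j R s0 \<Longrightarrow>
      prefix_comp L i (H i x) = prefix_comp L i x - (c * prefix_comp L i x $ j) *\<^sub>R u i"
    and u: "\<And>i m. i \<in> {1..n} \<Longrightarrow> m \<noteq> j \<Longrightarrow> \<bar>u i $ m\<bar> \<le> M" "\<And>i. i \<in> {1..n} \<Longrightarrow> u i $ j = 1"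
    and c: "0 \<le> c" "c \<le> 1" and "0 \<le> M" "0 \<le> s0"
  shows "b + m \<le> n \<Longrightarrow> prefix_comp L (b + m) x \<in> jbox j \<rho> s \<Longrightarrow> \<rho> + m * c * s0 * M \<le> R \<Longrightarrow> s \<le> s0 \<Longrightarrow>
    prefix_comp L b (chain L H (Suc b) m x) \<in> jbox j (\<rho> + m * c * s0 * M) ((1 - c) ^ m * s)"
proof (induction m arbitrary: x \<rho> s)
  case 0
  then show ?case
    by simp
next
  case (Suc m)
  define i where "i = Suc (b + m)"
  have i: "i \<in> {1..n}"
    using Suc.prems(1) by (simp add: i_def)
  have x: "prefix_comp L i x \<in> jbox j \<rho> s"
    using Suc.prems(2) by (simp add: i_def)
  have "0 \<le> Suc m * c * s0 * M"
    using c \<open>0 \<le> M\<close> \<open>0 \<le> s0\<close> by simp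
  then have "prefix_comp L i x \<in> jbox j R s0"
    using x jbox_mono[of \<rho> R s s0 j] Suc.prems(3,4) by auto
  then have "prefix_comp L (b + m) (L i (H i x))
      = prefix_comp L i x - (c * prefix_comp L i x $ j) *\<^sub>R u i"
    using step[OF i] by (simp add: i_def)
  also have "\<dots> \<in> jbox j (\<rho> + c * s0 * M) ((1 - c) * s)"
    using shear_step_in_jbox[OF x Suc.prems(4) c] u i by blast
  finally have x': "prefix_comp L (b + m) (L i (H i x)) \<in> jbox j (\<rho> + c * s0 * M) ((1 - c) * s)" .
  have "0 \<le> s"
    using x by (auto simp: jbox_def intro: order_trans[OF abs_ge_zero])
  then have "(1 - c) * s \<le> s0"
    using mult_nonneg_nonneg[OF c(1) \<open>0 \<le> s\<close>] Suc.prems(4) by (simp add: left_diff_distrib)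
  moreover have "\<rho> + c * s0 * M + m * c * s0 * M \<le> R"
    using Suc.prems(3) by (simp add: algebra_simps)
  ultimately have "prefix_comp L b (chain L H (Suc b) m (L i (H i x)))
      \<in> jbox j (\<rho> + c * s0 * M + m * c * s0 * M) ((1 - c) ^ m * ((1 - c) * s))"
    using Suc.IH[OF _ x'] Suc.prems(1) by simp
  moreover have "\<rho> + c * s0 * M + m * c * s0 * M = \<rho> + Suc m * c * s0 * M"
    by (simp add: algebra_simps)
  moreover have "(1 - c) ^ m * ((1 - c) * s) = (1 - c) ^ Suc m * s"
    by simp
  moreover have "chain L H (Suc b) (Suc m) x = chain L H (Suc b) m (L i (H i x))"
    by (simp add: i_def)
  ultimately show ?case
    by metis
qed

lemma chain_shear_maps_in_jbox:
  fixes j :: "'n::finite" and L :: "nat \<Rightarrow> real^'n \<Rightarrow> real^'n" and \<delta> \<tau> c :: real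
  assumes L: "\<forall>i\<in>{1..n}. linear (L i) \<and> bij (L i)" and "0 < \<delta>" "\<delta> < 1" "0 < \<tau>" "0 \<le> c" "c \<le> 1"
    and M: "\<And>i. i \<in> {1..n} \<Longrightarrow> row_slope j (prefix_comp L i) \<le> M" "0 \<le> M"
    and small: "k * c * \<tau> * M \<le> \<delta> / 2" and k: "(1 - c) ^ k \<le> \<delta>" and "k \<le> i" "i \<le> n"
  shows "chain L (\<lambda>i. shear_map j (1 - \<delta> / 2) (1 - \<delta>) c \<tau> (prefix_comp L i)) (i - k + 1) k
      ` iter_pre L (jbox j (1 - \<delta>) ((1 - \<delta>) * \<tau>)) i \<subseteq> iter_pre L (jbox j 1 (\<delta> * \<tau>)) (i - k)"
proof (clarsimp simp: iter_pre_eq_vimage)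
  let ?A = "prefix_comp L" and ?r = "1 - \<delta> / 2" and ?r' = "1 - \<delta>"
  fix x
  assume x: "?A i x \<in> jbox j ?r' (?r' * \<tau>)"
  have A: "linear (?A l)" "surj (?A l)" if "l \<in> {1..n}" for l
    using linear_bij_prefix_comp[of l L] L that by (auto simp: bij_is_surj)
  have "k * c * (?r' * \<tau>) * M = ?r' * (k * c * \<tau> * M)"
    by (simp add: algebra_simps)
  also have "\<dots> \<le> 1 * (\<delta> / 2)"
    using \<open>0 < \<delta>\<close> \<open>\<delta> < 1\<close> \<open>0 < \<tau>\<close> \<open>0 \<le> c\<close> M(2) small by (intro mult_mono) auto
  finally have drift: "?r' + k * c * (?r' * \<tau>) * M \<le> ?r"
    by simp
  have "?A (i - k) (chain L (\<lambda>i. shear_map j ?r ?r' c \<tau> (?A i)) (Suc (i - k)) k x)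
      \<in> jbox j (?r' + k * c * (?r' * \<tau>) * M) ((1 - c) ^ k * (?r' * \<tau>))"
    (is "_ \<in> jbox j ?a ?b")
  proof (rule chain_in_jbox[where n = n and R = ?r and u = "\<lambda>l. ?A l (row_dual j (?A l))"])
    show "?A l (shear_map j ?r ?r' c \<tau> (?A l) y)
        = ?A l y - (c * ?A l y $ j) *\<^sub>R ?A l (row_dual j (?A l))"
      if "l \<in> {1..n}" "?A l y \<in> jbox j ?r (?r' * \<tau>)" for l y
      using shear_map_in_coordinates[OF A(1)[OF that(1)] \<open>0 < \<tau>\<close> _ _ that(2)] \<open>0 < \<delta>\<close> by simp
    show "\<bar>?A l (row_dual j (?A l)) $ m\<bar> \<le> M" if "l \<in> {1..n}" for l m
      using abs_row_dual_nth_le[OF A(1)[OF that]] M(1)[OF that] by (rule order_trans)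
    show "?A l (row_dual j (?A l)) $ j = 1" if "l \<in> {1..n}" for l
      using row_dual_nth[OF A[OF that]] .
  qed (use x drift \<open>k \<le> i\<close> \<open>i \<le> n\<close> \<open>0 \<le> c\<close> \<open>c \<le> 1\<close> M(2) \<open>\<delta> < 1\<close> \<open>0 < \<tau>\<close> in auto)
  moreover have "jbox j ?a ?b \<subseteq> jbox j 1 (\<delta> * \<tau>)"
    using drift k \<open>0 < \<delta>\<close> \<open>\<delta> < 1\<close> \<open>0 < \<tau>\<close> \<open>c \<le> 1\<close> by (intro jbox_mono mult_mono) auto
  ultimately show "?A (i - k) (chain L (\<lambda>i. shear_map j ?r ?r' c \<tau> (?A i)) (Suc (i - k)) k x)
      \<in> jbox j 1 (\<delta> * \<tau>)"
    by blast
qed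

lemma shear_maps_properties:
  fixes j :: "'n::finite" and L :: "nat \<Rightarrow> real^'n \<Rightarrow> real^'n" and \<delta> \<tau> c :: real
  assumes L: "\<forall>i\<in>{1..n}. linear (L i) \<and> bij (L i)" and "0 < \<delta>" "\<delta> < 1" "0 < \<tau>"
    and c: "0 < c" "c * (1 + bump_deriv_bound (1 - \<delta>)) \<le> e / 2" and e: "e < 1" "e \<le> \<epsilon>"
    and k: "(1 - c) ^ k \<le> \<delta>"
    and M: "\<And>i. i \<in> {1..n} \<Longrightarrow> row_slope j (prefix_comp L i) \<le> M" "0 \<le> M"
    and small: "\<tau> * c * CARD('n) * bump_deriv_bound (1 - \<delta> / 2) * M \<le> e / 2" "k * c * \<tau> * M \<le> \<delta> / 2"
  shows "(\<forall>i\<in>{1..n}. C1_diffeo (shear_map j (1 - \<delta> / 2) (1 - \<delta>) c \<tau> (prefix_comp L i)) \<and>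
        deriv_close \<epsilon> (shear_map j (1 - \<delta> / 2) (1 - \<delta>) c \<tau> (prefix_comp L i)) \<and>
        (\<forall>x. x \<notin> iter_pre L (jbox j 1 \<tau>) i \<longrightarrow>
          shear_map j (1 - \<delta> / 2) (1 - \<delta>) c \<tau> (prefix_comp L i) x = x)) \<and>
    (\<forall>i. k \<le> i \<and> i \<le> n \<longrightarrow>
        chain L (\<lambda>i. shear_map j (1 - \<delta> / 2) (1 - \<delta>) c \<tau> (prefix_comp L i)) (i - k + 1) k
          ` iter_pre L (jbox j (1 - \<delta>) ((1 - \<delta>) * \<tau>)) i \<subseteq> iter_pre L (jbox j 1 (\<delta> * \<tau>)) (i - k))"
proof (intro conjI ballI allI impI)
  let ?A = "prefix_comp L" and ?r = "1 - \<delta> / 2" and ?r' = "1 - \<delta>"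
    and ?B = "bump_deriv_bound (1 - \<delta> / 2)"
  have r: "0 < ?r" "?r < 1" and r': "0 < ?r'" "?r' < 1"
    using \<open>0 < \<delta>\<close> \<open>\<delta> < 1\<close> by auto
  fix i
  {
    assume i: "i \<in> {1..n}"
    have A: "linear (?A i)" "surj (?A i)"
      using linear_bij_prefix_comp[of i L] L i by (auto simp: bij_is_surj)
    have "\<tau> * c * CARD('n) * ?B * row_slope j (?A i) \<le> \<tau> * c * CARD('n) * ?B * M"
      using M(1)[OF i] \<open>0 < \<tau>\<close> \<open>0 < c\<close> bump_deriv_bound_nonneg[OF r] by (intro mult_left_mono) auto
    then have "c * (1 + bump_deriv_bound ?r') + \<tau> * c * CARD('n) * ?B * row_slope j (?A i) \<le> e"
      using c(2) small(1) by linarith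
    from shear_map_C1_diffeo_deriv_close[OF A r r' _ _ \<open>e < 1\<close> this]
    have "C1_diffeo (shear_map j ?r ?r' c \<tau> (?A i)) \<and> deriv_close e (shear_map j ?r ?r' c \<tau> (?A i))"
      using \<open>0 < \<tau>\<close> \<open>0 < c\<close> by simp
    then show "C1_diffeo (shear_map j ?r ?r' c \<tau> (?A i))"
      and "deriv_close \<epsilon> (shear_map j ?r ?r' c \<tau> (?A i))"
      using deriv_close_mono \<open>e \<le> \<epsilon>\<close> by blast+
    show "shear_map j ?r ?r' c \<tau> (?A i) x = x" if "x \<notin> iter_pre L (jbox j 1 \<tau>) i" for x
      using that \<open>0 < \<tau>\<close> by (intro shear_map_eq_id r r') (auto simp: iter_pre_eq_vimage)
  }
  have "0 \<le> c * bump_deriv_bound ?r'"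
    using \<open>0 < c\<close> bump_deriv_bound_nonneg[OF r'] by simp
  then have "c \<le> 1"
    using c e by (simp add: algebra_simps)
  then show "chain L (\<lambda>i. shear_map j ?r ?r' c \<tau> (?A i)) (i - k + 1) k
      ` iter_pre L (jbox j ?r' (?r' * \<tau>)) i
      \<subseteq> iter_pre L (jbox j 1 (\<delta> * \<tau>)) (i - k)" if "k \<le> i \<and> i \<le> n"
    using that \<open>0 < c\<close>
    by (intro chain_shear_maps_in_jbox[OF L \<open>0 < \<delta>\<close> \<open>\<delta> < 1\<close> \<open>0 < \<tau>\<close> _ _ M small(2) k]) auto
qed

lemma shear_maps_small_tau:
  fixes j :: "'n::finite" and L :: "nat \<Rightarrow> real^'n \<Rightarrow> real^'n" and \<delta> c :: real
  assumes L: "\<forall>i\<in>{1..n}. linear (L i) \<and> bij (L i)" and "0 < \<delta>" "\<delta> < 1"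
    and c: "0 < c" "c * (1 + bump_deriv_bound (1 - \<delta>)) \<le> e / 2" and e: "e < 1" "e \<le> \<epsilon>"
    and k: "(1 - c) ^ k \<le> \<delta>"
  shows "\<exists>\<tau>0>0. \<forall>\<tau>. 0 < \<tau> \<and> \<tau> < \<tau>0 \<longrightarrow>
    (\<forall>i\<in>{1..n}. C1_diffeo (shear_map j (1 - \<delta> / 2) (1 - \<delta>) c \<tau> (prefix_comp L i)) \<and>
        deriv_close \<epsilon> (shear_map j (1 - \<delta> / 2) (1 - \<delta>) c \<tau> (prefix_comp L i)) \<and>
        (\<forall>x. x \<notin> iter_pre L (jbox j 1 \<tau>) i \<longrightarrow>
          shear_map j (1 - \<delta> / 2) (1 - \<delta>) c \<tau> (prefix_comp L i) x = x)) \<and>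
    (\<forall>i. k \<le> i \<and> i \<le> n \<longrightarrow>
        chain L (\<lambda>i. shear_map j (1 - \<delta> / 2) (1 - \<delta>) c \<tau> (prefix_comp L i)) (i - k + 1) k
          ` iter_pre L (jbox j (1 - \<delta>) ((1 - \<delta>) * \<tau>)) i \<subseteq> iter_pre L (jbox j 1 (\<delta> * \<tau>)) (i - k))"
  (is "\<exists>\<tau>0>0. \<forall>\<tau>. _ \<longrightarrow> ?P \<tau>")
proof -
  let ?A = "prefix_comp L" and ?B = "bump_deriv_bound (1 - \<delta> / 2)"
  have slope_nonneg: "0 \<le> row_slope j (?A i)" if "i \<in> {1..n}" for i
    unfolding row_slope_def using linear_bij_prefix_comp[of i L] L that
    by (intro divide_nonneg_nonneg onorm_pos_le) (auto simp: linear_conv_bounded_linear)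
  define M where "M = (\<Sum>i=1..n. row_slope j (?A i))"
  have M: "row_slope j (?A i) \<le> M" if "i \<in> {1..n}" for i
    unfolding M_def using slope_nonneg that by (intro member_le_sum) auto
  have "0 \<le> M"
    unfolding M_def using slope_nonneg by (intro sum_nonneg) auto
  have "0 \<le> ?B" "0 \<le> c * bump_deriv_bound (1 - \<delta>)"
    using bump_deriv_bound_nonneg \<open>0 < \<delta>\<close> \<open>\<delta> < 1\<close> \<open>0 < c\<close> by auto
  then have "0 < e"
    using c by (simp add: algebra_simps)
  \<comment> \<open>\<open>\<tau> * K\<close> bounds both the \<open>\<tau>\<close>-dependent part of the derivative estimate and the
    drift of the transverse coordinates over \<open>k\<close> steps.\<close>
  define K where "K = c * M * (CARD('n) * ?B + k)"
  have "0 \<le> K"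
    unfolding K_def using \<open>0 < c\<close> \<open>0 \<le> M\<close> \<open>0 \<le> ?B\<close> by simp
  define \<tau>0 where "\<tau>0 = min e \<delta> / (2 * (K + 1))"
  have "0 < \<tau>0"
    unfolding \<tau>0_def using \<open>0 < e\<close> \<open>0 < \<delta>\<close> \<open>0 \<le> K\<close> by simp
  moreover have "?P \<tau>" if "0 < \<tau>" "\<tau> < \<tau>0" for \<tau>
  proof -
    have "\<tau> * K \<le> \<tau>0 * (K + 1)"
      using that \<open>0 \<le> K\<close> by (intro mult_mono) auto
    also have "\<dots> = min e \<delta> / 2"
      unfolding \<tau>0_def using \<open>0 \<le> K\<close> by (simp add: field_simps)
    finally have "\<tau> * c * CARD('n) * ?B * M + k * c * \<tau> * M \<le> min e \<delta> / 2"
      unfolding K_def by (simp add: algebra_simps)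
    moreover have "0 \<le> \<tau> * c * CARD('n) * ?B * M" "0 \<le> k * c * \<tau> * M"
      using that \<open>0 < c\<close> \<open>0 \<le> ?B\<close> \<open>0 \<le> M\<close> by simp_all
    ultimately have "\<tau> * c * CARD('n) * ?B * M \<le> e / 2" "k * c * \<tau> * M \<le> \<delta> / 2"
      by linarith+
    from shear_maps_properties[OF L \<open>0 < \<delta>\<close> \<open>\<delta> < 1\<close> \<open>0 < \<tau>\<close> c e k M \<open>0 \<le> M\<close> this] show ?thesis .
  qed
  ultimately show ?thesis
    by blast
qed

theorem lemma3:
  fixes j :: "'n::finite" and \<epsilon> \<delta> :: real
  assumes "\<epsilon> > 0" and "0 < \<delta>" and "\<delta> < 1"
  shows "\<exists>k::nat. \<exists>Hc :: real \<Rightarrow> (nat \<Rightarrow> real^'n \<Rightarrow> real^'n) \<Rightarrow> nat \<Rightarrow> real^'n \<Rightarrow> real^'n.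
    (\<forall>\<tau> L L' i. (\<forall>m\<in>{1..i}. L m = L' m) \<longrightarrow> Hc \<tau> L i = Hc \<tau> L' i) \<and>
    (\<forall>n L. n \<ge> k \<and> (\<forall>i\<in>{1..n}. linear (L i) \<and> bij (L i)) \<longrightarrow>
      (\<exists>\<tau>0>0. \<forall>\<tau>. 0 < \<tau> \<and> \<tau> < \<tau>0 \<longrightarrow>
         (\<forall>i\<in>{1..n}. C1_diffeo (Hc \<tau> L i) \<and> deriv_close \<epsilon> (Hc \<tau> L i) \<and>
             (\<forall>x. x \<notin> iter_pre L (jbox j 1 \<tau>) i \<longrightarrow> Hc \<tau> L i x = x)) \<and>
         (\<forall>i. k \<le> i \<and> i \<le> n \<longrightarrow>
             chain L (Hc \<tau> L) (i - k + 1) k ` iter_pre L (jbox j (1 - \<delta>) ((1 - \<delta>) * \<tau>)) i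
               \<subseteq> iter_pre L (jbox j 1 (\<delta> * \<tau>)) (i - k))))"
proof -
  define e where "e = min \<epsilon> (1 / 2)"
  \<comment> \<open>Half of the derivative budget \<open>e\<close>; the other half is left for the \<open>\<tau>\<close>-dependent part.\<close>
  define c where "c = e / (2 * (1 + bump_deriv_bound (1 - \<delta>)))"
  have e: "0 < e" "e < 1" "e \<le> \<epsilon>"
    using assms by (auto simp: e_def)
  have "0 \<le> bump_deriv_bound (1 - \<delta>)"
    using assms by (intro bump_deriv_bound_nonneg) auto
  then have c: "0 < c" "c * (1 + bump_deriv_bound (1 - \<delta>)) = e / 2"
    using e by (simp_all add: c_def field_simps)
  moreover have "c \<le> c * (1 + bump_deriv_bound (1 - \<delta>))"
    using c(1) \<open>0 \<le> bump_deriv_bound (1 - \<delta>)\<close> by simp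
  ultimately have "c < 1"
    using e by linarith
  obtain k where k: "(1 - c) ^ k < \<delta>"
    using real_arch_pow_inv[of \<delta> "1 - c"] assms c \<open>c < 1\<close> by auto
  define Hc :: "real \<Rightarrow> (nat \<Rightarrow> real^'n \<Rightarrow> real^'n) \<Rightarrow> nat \<Rightarrow> real^'n \<Rightarrow> real^'n"
    where "Hc = (\<lambda>\<tau> L i. shear_map j (1 - \<delta> / 2) (1 - \<delta>) c \<tau> (prefix_comp L i))"
  show ?thesis
  proof (intro exI[of _ k] exI[of _ Hc] conjI allI impI)
    show "Hc \<tau> L i = Hc \<tau> L' i" if "\<forall>m\<in>{1..i}. L m = L' m" for \<tau> L L' i
      using prefix_comp_cong[OF that] by (simp add: Hc_def)
  qed (unfold Hc_def, intro shear_maps_small_tau[where e = e], use assms c e k in auto)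
qed

end
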